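(* Let $\mathbb G=V_1\times V_2$ be a step-two Carnot group with $\dim V_2=3$. Then $\mathcal A(V_1\times V_2)\subsetneq\mathcal A_h(\mathbb G)$ if and only if $\mathbb G$ is isomorphic to the direct product $\mathbb F_3\times\mathbb R^d$ for some integer $d\geq0$.
   Context: A step-two Carnot group is $\mathbb G=V_1\times V_2$ ($V_1,V_2$ finite-dimensional real vector spaces, $V_2\ne\{0\}$) with a bilinear skew-symmetric $[\cdot,\cdot]:V_1\times V_1\to V_2$ whose image spans $V_2$, and group law $(x,z)\cdot(x',z')=(x+x',z+z'+[x,x'])$. $\mathcal A_h(\mathbb G)$ is the space of maps $f:\mathbb G\to\mathbb R$ such that for all $(x,z)\in\mathbb G$, $y\in V_1$, $t\mapsto f((x,z)\cdot(ty,0))$ is affine; $\mathcal A(V_1\times V_2)$ is the space of maps affine in the usual sense. $\mathbb F_3=\Lambda^1(\mathbb R^3)\times\Lambda^2(\mathbb R^3)$ with bracket $[\theta,\theta']=\theta\wedge\theta'$; $\mathbb F_3\times\mathbb R^d$ is $(\Lambda^1(\mathbb R^3)\oplus\mathbb R^d)\times\Lambda^2(\mathbb R^3)$ with bracket $[\theta+u,\theta'+u']:=\theta\wedge\theta'$. Two step-two Carnot groups are isomorphic if there is a bijective Carnot morphism between them, where a Carnot morphism is $\pi(x,z)=(\pi_1(x),\pi_2(z))$ with $\pi_1,\pi_2$ linear and $\pi_2([x,y])=[\pi_1(x),\pi_1(y)]'$. *)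

theory Defs
  imports "HOL-Analysis.Analysis"
begin

(* A step-two Carnot group G = V1 x V2 is given by the bracket br : V1 x V1 -> V2.
   V1 = 'a, V2 = 'b are finite-dimensional real vector spaces (euclidean_space types). *)
definition step2_carnot :: "('a::euclidean_space \<Rightarrow> 'a \<Rightarrow> 'b::euclidean_space) \<Rightarrow> bool" where
  "step2_carnot br \<longleftrightarrow> bilinear br \<and> (\<forall>x y. br x y = - br y x)
     \<and> span (range (\<lambda>(x, y). br x y)) = UNIV \<and> (UNIV :: 'b set) \<noteq> {0}"

definition cmult :: "('a::euclidean_space \<Rightarrow> 'a \<Rightarrow> 'b::euclidean_space) \<Rightarrow> 'a \<times> 'b \<Rightarrow> 'a \<times> 'b \<Rightarrow> 'a \<times> 'b" where
  "cmult br p q = (fst p + fst q, snd p + snd q + br (fst p) (fst q))"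

definition horiz_affine :: "('a::euclidean_space \<Rightarrow> 'a \<Rightarrow> 'b::euclidean_space) \<Rightarrow> ('a \<times> 'b \<Rightarrow> real) \<Rightarrow> bool" where
  "horiz_affine br f \<longleftrightarrow>
     (\<forall>p y. \<exists>a b. \<forall>t::real. f (cmult br p (t *\<^sub>R y, 0)) = a * t + b)"

definition affine_map :: "('v::real_vector \<Rightarrow> real) \<Rightarrow> bool" where
  "affine_map f \<longleftrightarrow> (\<exists>g c. linear g \<and> (\<forall>v. f v = g v + c))"

(* Wedge product of two 1-forms on R^3 (coordinates w.r.t. e1,e2,e3), with values in
   Lambda^2(R^3), coordinates w.r.t. the basis e1/\e2, e1/\e3, e2/\e3 (indices 1,2,3). *)
definition wedge3 :: "real^3 \<Rightarrow> real^3 \<Rightarrow> real^3" where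
  "wedge3 a b = vector [a$1 * b$2 - a$2 * b$1, a$1 * b$3 - a$3 * b$1, a$2 * b$3 - a$3 * b$2]"

(* Underlying first layer of F_3 x R^d: Lambda^1(R^3) (+) R^d, with R^d realised as
   the functions nat \<Rightarrow> real supported in {..<d}. *)
definition F3Rd_V1 :: "nat \<Rightarrow> ((real^3) \<times> (nat \<Rightarrow> real)) set" where
  "F3Rd_V1 d = {(\<theta>, u). \<forall>i\<ge>d. u i = 0}"

(* G is isomorphic (via a bijective Carnot morphism pi = (pi1, pi2)) to F_3 x R^d.
   pi1 : V1 -> Lambda^1(R^3) (+) R^d is x \<mapsto> (\<theta> x, (l_i x)_{i<d}), linear means that
   \<theta> and every coordinate functional l_i are linear; pi2 : V2 -> Lambda^2(R^3). The
   bracket of F_3 x R^d is [\<theta>+u, \<theta>'+u'] = \<theta> /\ \<theta>'. *)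
definition iso_F3Rd :: "('a::euclidean_space \<Rightarrow> 'a \<Rightarrow> 'b::euclidean_space) \<Rightarrow> nat \<Rightarrow> bool" where
  "iso_F3Rd br d \<longleftrightarrow>
     (\<exists>(\<theta> :: 'a \<Rightarrow> (real^3)) (l :: nat \<Rightarrow> 'a \<Rightarrow> real) (\<pi>2 :: 'b \<Rightarrow> real^3).
        linear \<theta> \<and> (\<forall>i<d. linear (l i)) \<and> linear \<pi>2 \<and>
        bij_betw (\<lambda>x. (\<theta> x, \<lambda>i. if i < d then l i x else 0)) UNIV (F3Rd_V1 d) \<and>
        bij \<pi>2 \<and>
        (\<forall>x y. \<pi>2 (br x y) = wedge3 (\<theta> x) (\<theta> y)))"

end

theory Submission
  imports Defs
begin

(* Horizontal affinity propagates: f is affine along the straight lines through (x,z) in the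
   directions (y, [y,w]), since such a line is a transversal of a doubly ruled surface swept out
   by horizontal lines.  Hence f is affine in x, and affine in z along every bracket direction;
   when dim V2 = 3 the brackets lie on no quadric cone, which makes f affine in z.  So
   f = const + linear + beta with a bilinear beta(x,z) satisfying beta(y,[y,w]) = 0.  If f is not
   affine, beta /= 0 yields u1,u2,u3 with beta(u1,[u2,u3]) = 1; then beta(x,[y,w]) is the
   determinant of (a(x),a(y),a(w)) for a linear a : V1 -> R^3, and a together with the coordinates
   of V2 dual to the functionals beta(u_i, _) is an isomorphism onto F3 x R^d.  Conversely, on
   F3 x R^d the wedge product of the first-layer and the second-layer coordinate is horizontally
   affine but not affine. *)

section \<open>Affine functions of a real variable\<close>

lemma affine_map_real_iff:
  "affine_map (g :: real \<Rightarrow> real) \<longleftrightarrow> (\<exists>m c. \<forall>t. g t = m * t + c)"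
proof
  assume "affine_map g"
  then obtain h c where "linear h" and g: "\<And>t. g t = h t + c"
    unfolding affine_map_def by blast
  then have "g t = h 1 * t + c" for t
    using linear_scale[of h t 1] by (simp add: g)
  then show "\<exists>m c. \<forall>t. g t = m * t + c" by blast
next
  assume "\<exists>m c. \<forall>t. g t = m * t + c"
  then obtain m c where "\<And>t. g t = m * t + c" by blast
  moreover have "linear (\<lambda>t::real. m * t)"
    by (intro linearI) (simp_all add: algebra_simps)
  ultimately show "affine_map g" unfolding affine_map_def by blast
qed

lemma affine_map_realI: "(\<And>t. g t = m * t + c) \<Longrightarrow> affine_map (g :: real \<Rightarrow> real)"
  unfolding affine_map_real_iff by blast

lemma affine_map_real_interpolation:
  assumes "affine_map (g :: real \<Rightarrow> real)"
  shows "g t = g 0 + t * (g 1 - g 0)"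
  using assms unfolding affine_map_real_iff by (auto simp: algebra_simps)

lemma affine_map_real_combination:
  assumes "affine_map (g :: real \<Rightarrow> real)" and "affine_map h"
  shows "affine_map (\<lambda>t. a * g t + b * h t)"
proof -
  obtain m1 c1 m2 c2 where "\<forall>t. g t = m1 * t + c1" and "\<forall>t. h t = m2 * t + c2"
    using assms unfolding affine_map_real_iff by blast
  then show ?thesis
    by (intro affine_map_realI[where m = "a * m1 + b * m2" and c = "a * c1 + b * c2"])
      (simp add: algebra_simps)
qed

lemma affine_map_cubic_coeffs:
  assumes "affine_map (\<lambda>t. A + B * t + C * t^2 + D * t^3)"
  shows "C = 0" and "D = 0"
proof -
  have "A - B + C - D = A - (A + B + C + D - A)"
    using affine_map_real_interpolation[OF assms, of "-1"] by (simp add: power2_eq_square power3_eq_cube)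
  moreover have "A + 2*B + 4*C + 8*D = A + 2 * (A + B + C + D - A)"
    using affine_map_real_interpolation[OF assms, of 2] by (simp add: power2_eq_square power3_eq_cube)
  ultimately show "C = 0" and "D = 0" by (simp_all add: algebra_simps)
qed

lemma affine_map_quadratic_coeff:
  assumes "affine_map (\<lambda>t. A + B * t + C * t^2)"
  shows "C = 0"
  using affine_map_cubic_coeffs(1)[of A B C 0] assms by simp

lemma affine_map_transversal:
  fixes F :: "real \<Rightarrow> real \<Rightarrow> real"
  assumes "\<And>a. affine_map (\<lambda>l. F a l)" and "affine_map (\<lambda>a. F a 0)" and "affine_map (\<lambda>a. F a 1)"
  shows "affine_map (\<lambda>a. F a l)"
proof -
  have "F a l = (1 - l) * F a 0 + l * F a 1" for a
    using affine_map_real_interpolation[OF assms(1)[of a], of l] by (simp add: algebra_simps)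
  then have "(\<lambda>a. F a l) = (\<lambda>a. (1 - l) * F a 0 + l * F a 1)" by blast
  then show ?thesis using affine_map_real_combination[OF assms(2,3)] by simp
qed

lemma multiaffine3_polynomial:
  fixes P :: "real \<Rightarrow> real \<Rightarrow> real \<Rightarrow> real"
  assumes "\<And>t2 t3. affine_map (\<lambda>t1. P t1 t2 t3)" and "\<And>t1 t3. affine_map (\<lambda>t2. P t1 t2 t3)"
    and "\<And>t1 t2. affine_map (\<lambda>t3. P t1 t2 t3)"
  obtains a0 a1 a2 a3 a12 a13 a23 a123 where "\<And>t1 t2 t3. P t1 t2 t3 = a0 + a1 * t1 + a2 * t2
      + a3 * t3 + a12 * (t1 * t2) + a13 * (t1 * t3) + a23 * (t2 * t3) + a123 * (t1 * t2 * t3)"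
proof -
  note interp = affine_map_real_interpolation
  have s1: "P t1 t2 t3 = P 0 t2 t3 + t1 * (P 1 t2 t3 - P 0 t2 t3)" for t1 t2 t3
    using interp[OF assms(1)] .
  have s2: "P e t2 t3 = P e 0 t3 + t2 * (P e 1 t3 - P e 0 t3)" for e t2 t3
    using interp[OF assms(2)] .
  have s3: "P e e' t3 = P e e' 0 + t3 * (P e e' 1 - P e e' 0)" for e e' t3
    using interp[OF assms(3)] .
  show thesis
  proof (rule that)
    show "P t1 t2 t3 = P 0 0 0 + (P 1 0 0 - P 0 0 0) * t1 + (P 0 1 0 - P 0 0 0) * t2
      + (P 0 0 1 - P 0 0 0) * t3 + (P 1 1 0 - P 1 0 0 - P 0 1 0 + P 0 0 0) * (t1 * t2)
      + (P 1 0 1 - P 1 0 0 - P 0 0 1 + P 0 0 0) * (t1 * t3)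
      + (P 0 1 1 - P 0 1 0 - P 0 0 1 + P 0 0 0) * (t2 * t3)
      + (P 1 1 1 - P 1 1 0 - P 1 0 1 - P 0 1 1 + P 1 0 0 + P 0 1 0 + P 0 0 1 - P 0 0 0)
        * (t1 * t2 * t3)" for t1 t2 t3
      unfolding s1[of t1 t2 t3] s2[of 0 t2 t3] s2[of 1 t2 t3] s3[of 0 0 t3] s3[of 0 1 t3] s3[of 1 0 t3]
        s3[of 1 1 t3]
      by (simp add: algebra_simps)
  qed
qed

lemma multiaffine3_line_quadratic_coeff:
  fixes a0 a1 a2 a3 a12 a13 a23 a123 :: real
  assumes P: "\<And>t1 t2 t3. P t1 t2 t3 = a0 + a1 * t1 + a2 * t2 + a3 * t3 + a12 * (t1 * t2)
       + a13 * (t1 * t3) + a23 * (t2 * t3) + a123 * (t1 * t2 * t3)"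
    and "affine_map (\<lambda>s. P (t1 + s * d1) (t2 + s * d2) (t3 + s * d3))"
  shows "a12 * d1 * d2 + a13 * d1 * d3 + a23 * d2 * d3
      + a123 * (d1 * d2 * t3 + d1 * d3 * t2 + d2 * d3 * t1) = 0"
proof -
  define B where "B = a1 * d1 + a2 * d2 + a3 * d3 + a12 * (t1 * d2 + d1 * t2)
     + a13 * (t1 * d3 + d1 * t3) + a23 * (t2 * d3 + d2 * t3)
     + a123 * (d1 * t2 * t3 + t1 * d2 * t3 + t1 * t2 * d3)"
  define C where "C = a12 * d1 * d2 + a13 * d1 * d3 + a23 * d2 * d3
     + a123 * (d1 * d2 * t3 + d1 * d3 * t2 + d2 * d3 * t1)"
  have "(\<lambda>s. P (t1 + s * d1) (t2 + s * d2) (t3 + s * d3))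
      = (\<lambda>s. P t1 t2 t3 + B * s + C * s^2 + (a123 * d1 * d2 * d3) * s^3)"
    unfolding B_def C_def P by (simp add: algebra_simps power2_eq_square power3_eq_cube)
  with assms(2) have "affine_map (\<lambda>s. P t1 t2 t3 + B * s + C * s^2 + (a123 * d1 * d2 * d3) * s^3)"
    by simp
  from affine_map_cubic_coeffs(1)[OF this] show ?thesis unfolding C_def .
qed

section \<open>Directions of affinity\<close>

definition affine_along :: "('v::real_vector \<Rightarrow> real) \<Rightarrow> 'v \<Rightarrow> bool" where
  "affine_along f d \<longleftrightarrow> (\<forall>p. affine_map (\<lambda>t. f (p + t *\<^sub>R d)))"

lemma affine_along_plane:
  fixes f :: "'v::real_vector \<Rightarrow> real"
  assumes u: "affine_along f u" and v: "affine_along f v" and uv: "affine_along f (u + v)"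
  shows "f (p + s *\<^sub>R u + t *\<^sub>R v) = f p + s * (f (p + u) - f p) + t * (f (p + v) - f p)"
proof -
  define g where "g s t = f (p + s *\<^sub>R u + t *\<^sub>R v)" for s t
  have gs: "g s t = g 0 t + s * (g 1 t - g 0 t)" for s t
  proof -
    have "affine_map (\<lambda>s. f ((p + t *\<^sub>R v) + s *\<^sub>R u))" using u unfolding affine_along_def ..
    from affine_map_real_interpolation[OF this, of s] show ?thesis
      unfolding g_def by (simp add: add.assoc add.commute add.left_commute)
  qed
  have gt: "g s t = g s 0 + t * (g s 1 - g s 0)" for s t
  proof -
    have "affine_map (\<lambda>t. f ((p + s *\<^sub>R u) + t *\<^sub>R v))" using v unfolding affine_along_def ..
    from affine_map_real_interpolation[OF this, of t] show ?thesis unfolding g_def by simp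
  qed
  define D where "D = g 1 1 - g 1 0 - g 0 1 + g 0 0"
  have "(\<lambda>r. g r r) = (\<lambda>r. g 0 0 + (g 1 0 - g 0 0 + g 0 1 - g 0 0) * r + D * r^2)"
  proof
    show "g r r = g 0 0 + (g 1 0 - g 0 0 + g 0 1 - g 0 0) * r + D * r^2" for r
      using gs[of r r] gt[of 0 r] gt[of 1 r] unfolding D_def
      by (simp add: algebra_simps power2_eq_square)
  qed
  moreover have "(\<lambda>r. g r r) = (\<lambda>r. f (p + r *\<^sub>R (u + v)))"
    unfolding g_def by (simp add: scaleR_right_distrib add.assoc)
  ultimately have "affine_map (\<lambda>r. g 0 0 + (g 1 0 - g 0 0 + g 0 1 - g 0 0) * r + D * r^2)"
    using uv unfolding affine_along_def by metis
  then have "D = 0" by (rule affine_map_quadratic_coeff)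
  then have "g 1 t = g 1 0 + t * (g 0 1 - g 0 0)" using gt[of 1 t] unfolding D_def by simp
  then have "g s t = g 0 0 + s * (g 1 0 - g 0 0) + t * (g 0 1 - g 0 0)"
    unfolding gs[of s t] gt[of 0 t] by (simp add: algebra_simps)
  then show ?thesis unfolding g_def by simp
qed

lemma affine_along_combination:
  assumes "affine_along f u" and "affine_along f v" and "affine_along f (u + v)"
  shows "affine_along f (a *\<^sub>R u + b *\<^sub>R v)"
  unfolding affine_along_def
proof
  fix p
  have "f (p + t *\<^sub>R (a *\<^sub>R u + b *\<^sub>R v))
      = (a * (f (p + u) - f p) + b * (f (p + v) - f p)) * t + f p" for t
    using affine_along_plane[OF assms, of p "t * a" "t * b"]
    by (simp add: scaleR_right_distrib add.assoc algebra_simps)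
  then show "affine_map (\<lambda>t. f (p + t *\<^sub>R (a *\<^sub>R u + b *\<^sub>R v)))" by (rule affine_map_realI)
qed

lemma linear_if_affine_along_all:
  assumes "\<And>d. affine_along g d"
  shows "linear (\<lambda>x. g x - g 0)"
proof (rule linearI)
  show "g (x + y) - g 0 = g x - g 0 + (g y - g 0)" for x y
    using affine_along_plane[OF assms assms assms, of 0 1 x 1 y] by simp
  show "g (r *\<^sub>R x) - g 0 = r *\<^sub>R (g x - g 0)" for r x
  proof -
    have "affine_map (\<lambda>t. g (0 + t *\<^sub>R x))" using assms unfolding affine_along_def by blast
    from affine_map_real_interpolation[OF this, of r] show ?thesis by simp
  qed
qed

lemma affine_along_if_affine_map:
  assumes "affine_map f"
  shows "affine_along f d"
  unfolding affine_along_def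
proof
  fix p
  obtain h c where "linear h" and f: "\<And>v. f v = h v + c"
    using assms unfolding affine_map_def by blast
  then have "f (p + t *\<^sub>R d) = h d * t + (h p + c)" for t
    by (simp add: f linear_add linear_scale)
  then show "affine_map (\<lambda>t. f (p + t *\<^sub>R d))" by (rule affine_map_realI)
qed

section \<open>Coordinates and kernels\<close>

lemma coordinates3_expansion:
  fixes c1 c2 c3 :: "'b::euclidean_space" and k1 k2 k3 :: "'b \<Rightarrow> real"
  assumes "DIM('b) = 3" and lk: "linear k1" "linear k2" "linear k3"
    and k1: "\<And>t1 t2 t3. k1 (t1 *\<^sub>R c1 + t2 *\<^sub>R c2 + t3 *\<^sub>R c3) = t1"
    and k2: "\<And>t1 t2 t3. k2 (t1 *\<^sub>R c1 + t2 *\<^sub>R c2 + t3 *\<^sub>R c3) = t2"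
    and k3: "\<And>t1 t2 t3. k3 (t1 *\<^sub>R c1 + t2 *\<^sub>R c2 + t3 *\<^sub>R c3) = t3"
  shows "v = k1 v *\<^sub>R c1 + k2 v *\<^sub>R c2 + k3 v *\<^sub>R c3"
proof -
  define \<Lambda> where "\<Lambda> t = t$1 *\<^sub>R c1 + t$2 *\<^sub>R c2 + t$3 *\<^sub>R c3" for t :: "real^3"
  have "linear \<Lambda>"
    unfolding \<Lambda>_def by (intro linearI) (simp_all add: algebra_simps)
  moreover have "inj \<Lambda>"
  proof (rule injI)
    fix t t' assume "\<Lambda> t = \<Lambda> t'"
    then have "t$1 = t'$1" "t$2 = t'$2" "t$3 = t'$3"
      unfolding \<Lambda>_def by (metis k1, metis k2, metis k3)
    then show "t = t'" by (simp add: vec_eq_iff forall_3)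
  qed
  ultimately have "dim (range \<Lambda>) = DIM('b)"
    using dim_image_eq[of \<Lambda> UNIV] assms(1) by simp
  then have "range \<Lambda> = UNIV"
    using dim_eq_full \<open>linear \<Lambda>\<close> by (metis span_linear_image span_UNIV)
  then obtain t where "v = \<Lambda> t" by (metis UNIV_I imageE)
  then show ?thesis unfolding \<Lambda>_def by (simp add: k1 k2 k3)
qed

lemma orthonormal_basis_kernel:
  fixes \<theta> :: "'a::euclidean_space \<Rightarrow> 'c::real_vector"
  assumes "linear \<theta>"
  obtains d and e :: "nat \<Rightarrow> 'a"
  where "\<And>i. i < d \<Longrightarrow> \<theta> (e i) = 0"
    and "\<And>i j. i < d \<Longrightarrow> j < d \<Longrightarrow> e i \<bullet> e j = (if i = j then 1 else 0)"
    and "\<And>x. \<theta> x = 0 \<Longrightarrow> (\<And>i. i < d \<Longrightarrow> x \<bullet> e i = 0) \<Longrightarrow> x = 0"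
proof -
  define K where "K = {x. \<theta> x = 0}"
  have "subspace K"
    unfolding K_def subspace_def by (simp add: linear_0 linear_add linear_scale assms)
  obtain B where BK: "B \<subseteq> K" and orth: "pairwise orthogonal B" and unit: "\<And>x. x \<in> B \<Longrightarrow> norm x = 1"
    and "independent B" and span: "span B = K"
    using orthonormal_basis_subspace[OF \<open>subspace K\<close>] by metis
  then have "finite B" using finiteI_independent by blast
  then obtain e where e: "bij_betw e {..<card B} B"
    using ex_bij_betw_nat_finite[OF \<open>finite B\<close>] by (metis lessThan_atLeast0)
  show thesis
  proof (rule that[of "card B" e])
    show "\<theta> (e i) = 0" if "i < card B" for i using e BK that by (auto simp: K_def dest: bij_betwE)
    show "e i \<bullet> e j = (if i = j then 1 else 0)" if "i < card B" "j < card B" for i j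
    proof (cases "i = j")
      case True
      then show ?thesis using unit[of "e i"] e that by (auto simp: norm_eq_1 dest: bij_betwE)
    next
      case False
      then have "e i \<noteq> e j" using e that by (auto simp: bij_betw_def inj_on_def)
      then show ?thesis using orth e that False
        by (auto simp: pairwise_def orthogonal_def dest: bij_betwE)
    qed
    show "x = 0" if "\<theta> x = 0" and "\<And>i. i < card B \<Longrightarrow> x \<bullet> e i = 0" for x
    proof -
      have "orthogonal x b" if "b \<in> B" for b
      proof -
        obtain i where "i < card B" "b = e i"
          using e \<open>b \<in> B\<close> by (auto simp: bij_betw_def)
        then show ?thesis using \<open>\<And>i. i < card B \<Longrightarrow> x \<bullet> e i = 0\<close> by (simp add: orthogonal_def)
      qed
      then have "orthogonal x x" using orthogonal_to_span span \<open>\<theta> x = 0\<close> unfolding K_def by blast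
      then show ?thesis by (simp add: orthogonal_def)
    qed
  qed
qed

lemma linear_surj_kernel_coordinates:
  fixes \<theta> :: "'a::euclidean_space \<Rightarrow> 'c::real_vector"
  assumes lin: "linear \<theta>" and "surj \<theta>"
  obtains d and l :: "nat \<Rightarrow> 'a \<Rightarrow> real"
  where "\<And>i. linear (l i)"
    and "bij_betw (\<lambda>x. (\<theta> x, \<lambda>i. if i < d then l i x else 0)) UNIV {(t, u). \<forall>i\<ge>d. u i = 0}"
proof (rule orthonormal_basis_kernel[OF lin])
  fix d and e :: "nat \<Rightarrow> 'a"
  assume eK: "\<And>i. i < d \<Longrightarrow> \<theta> (e i) = 0"
    and orthonormal: "\<And>i j. i < d \<Longrightarrow> j < d \<Longrightarrow> e i \<bullet> e j = (if i = j then 1 else 0)"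
    and complete: "\<And>x. \<theta> x = 0 \<Longrightarrow> (\<And>i. i < d \<Longrightarrow> x \<bullet> e i = 0) \<Longrightarrow> x = 0"
  define \<Phi> where "\<Phi> = (\<lambda>x. (\<theta> x, \<lambda>i. if i < d then x \<bullet> e i else 0))"
  have "inj \<Phi>"
  proof (rule injI)
    fix x y assume "\<Phi> x = \<Phi> y"
    then have \<theta>: "\<theta> x = \<theta> y"
      and coords: "(\<lambda>i. if i < d then x \<bullet> e i else 0) = (\<lambda>i. if i < d then y \<bullet> e i else 0)"
      unfolding \<Phi>_def by auto
    have "x \<bullet> e i = y \<bullet> e i" if "i < d" for i using fun_cong[OF coords, of i] that by simp
    then show "x = y"
      using complete[of "x - y"] \<theta> by (simp add: linear_diff[OF lin] inner_diff_left)
  qed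
  moreover have "range \<Phi> \<subseteq> {(t, u). \<forall>i\<ge>d. u i = 0}" unfolding \<Phi>_def by auto
  moreover have "q \<in> range \<Phi>" if "q \<in> {(t, u). \<forall>i\<ge>d. u i = 0}" for q
  proof -
    obtain t u where q: "q = (t, u)" by (cases q)
    with that have u: "\<And>i. i \<ge> d \<Longrightarrow> u i = 0" by simp
    obtain x0 where x0: "\<theta> x0 = t" using \<open>surj \<theta>\<close> by (metis surjD)
    define x where "x = x0 + (\<Sum>i<d. (u i - x0 \<bullet> e i) *\<^sub>R e i)"
    have "\<theta> x = t"
      unfolding x_def by (simp add: x0 eK linear_add[OF lin] linear_sum[OF lin] linear_scale[OF lin])
    moreover have "x \<bullet> e j = u j" if "j < d" for j
    proof -
      have "(\<Sum>i<d. (u i - x0 \<bullet> e i) * (e i \<bullet> e j)) = u j - x0 \<bullet> e j"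
        using that by (simp add: orthonormal if_distrib cong: if_cong)
      then show ?thesis unfolding x_def by (simp add: inner_add_left inner_sum_left)
    qed
    ultimately have "\<Phi> x = q" unfolding \<Phi>_def q using u by (auto simp: not_less)
    then show ?thesis by blast
  qed
  ultimately have "bij_betw \<Phi> UNIV {(t, u). \<forall>i\<ge>d. u i = 0}"
    by (intro bij_betw_imageI) (auto intro: subset_antisym)
  moreover have "linear (\<lambda>x. x \<bullet> e i)" for i by (simp add: linear_iff inner_add_left)
  ultimately show thesis using that[of "\<lambda>i x. x \<bullet> e i" d] unfolding \<Phi>_def by blast
qed

section \<open>Horizontally affine maps\<close>

lemma step2_carnotD:
  assumes "step2_carnot br"
  shows "bilinear br" and "\<And>x y. br x y = - br y x" and "span (range (\<lambda>(x, y). br x y)) = UNIV"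
  using assms unfolding step2_carnot_def by blast+

lemma skew_self_zero:
  assumes "\<And>x y. b x y = - b y x"
  shows "b x x = (0 :: 'b::real_vector)"
proof -
  have "b x x = - b x x" by (rule assms)
  then have "b x x + b x x = 0" by (metis add.right_inverse)
  then have "2 *\<^sub>R b x x = 0" by (simp only: scaleR_2)
  then show ?thesis by simp
qed

lemma scaleR_add_self: "a *\<^sub>R v + a *\<^sub>R v = (a * 2) *\<^sub>R (v :: 'a::real_vector)"
  by (metis mult_2_right scaleR_left_distrib)

lemma scaleR_3: "3 *\<^sub>R v = v + v + (v :: 'a::real_vector)"
proof -
  have "v + v + v = (1 + 1 + 1) *\<^sub>R v" by (simp only: scaleR_add_left scaleR_one)
  also have "(1 + 1 + 1 :: real) = 3" by simp
  finally show ?thesis by (rule sym)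
qed
lemma horiz_affine_iff_lines:
  assumes "bilinear br"
  shows "horiz_affine br f \<longleftrightarrow> (\<forall>x z y. affine_map (\<lambda>t. f ((x, z) + t *\<^sub>R (y, br x y))))"
proof -
  have "cmult br (x, z) (t *\<^sub>R y, 0) = (x, z) + t *\<^sub>R (y, br x y)" for x z y t
    by (simp add: cmult_def bilinear_rmul[OF assms])
  then show ?thesis
    unfolding horiz_affine_def affine_map_real_iff by (simp add: split_paired_All)
qed

lemma horiz_affine_if_affine_map:
  assumes "bilinear br" and "affine_map f"
  shows "horiz_affine br f"
  using affine_along_if_affine_map[OF assms(2)]
  unfolding horiz_affine_iff_lines[OF assms(1)] affine_along_def by blast

text \<open>Horizontal lines through the points of one horizontal line, with directions varying
  affinely, sweep out a doubly ruled surface; the second ruling consists of lines along which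
  \<open>f\<close> is then affine as well, although they are not horizontal.\<close>
lemma horiz_affine_regulus:
  fixes br :: "'a::euclidean_space \<Rightarrow> 'a \<Rightarrow> 'b::euclidean_space"
  assumes bl: "bilinear br" and skew: "\<And>x y. br x y = - br y x" and h: "horiz_affine br f"
  shows "affine_map (\<lambda>a. f ((2 *\<^sub>R x - x', z - br x x') + a *\<^sub>R (3 *\<^sub>R y, br (2 *\<^sub>R x + x') y)))"
proof -
  note lines = h[unfolded horiz_affine_iff_lines[OF bl], rule_format]
  note br_simps = bilinear_ladd[OF bl] bilinear_radd[OF bl] bilinear_lsub[OF bl] bilinear_rsub[OF bl]
    bilinear_lmul[OF bl] bilinear_rmul[OF bl] bilinear_lneg[OF bl] bilinear_rneg[OF bl]
  define v where "v a = x' - x - a *\<^sub>R y - a *\<^sub>R y" for a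
  define F where "F a l = f ((x + a *\<^sub>R y, z + a *\<^sub>R br x y) + l *\<^sub>R (v a, br (x + a *\<^sub>R y) (v a)))"
    for a l
  have br_v: "br (x + a *\<^sub>R y) (v a) = br x x' - a *\<^sub>R br x y - a *\<^sub>R br x' y" for a
  proof -
    have "br (x + a *\<^sub>R y) (v a) = br x x' - br x x - a *\<^sub>R br x y - a *\<^sub>R br x y + a *\<^sub>R br y x'
        - a *\<^sub>R br y x - (a * a) *\<^sub>R br y y - (a * a) *\<^sub>R br y y"
      unfolding v_def
      by (simp only: br_simps scaleR_diff_right scaleR_scaleR) (simp add: algebra_simps)
    also have "\<dots> = br x x' - a *\<^sub>R br x y - a *\<^sub>R br x' y"
      using skew[of y x'] skew[of y x] skew_self_zero[of br, OF skew, of x] skew_self_zero[of br, OF skew, of y]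
      by (simp add: algebra_simps)
    finally show ?thesis .
  qed
  have "affine_map (\<lambda>l. F a l)" for a
    unfolding F_def using lines[of "x + a *\<^sub>R y" "z + a *\<^sub>R br x y" "v a"] by simp
  moreover have "affine_map (\<lambda>a. F a 0)"
    unfolding F_def using lines[of x z y] by simp
  moreover have "affine_map (\<lambda>a. F a 1)"
  proof -
    have "F a 1 = f ((x', z + br x x') + a *\<^sub>R (- y, br x' (- y)))" for a
      unfolding F_def br_v by (simp add: v_def bilinear_rneg[OF bl] algebra_simps)
    then show ?thesis using lines[of x' "z + br x x'" "- y"] by simp
  qed
  ultimately have "affine_map (\<lambda>a. F a (-1))" by (rule affine_map_transversal)
  moreover have "F a (-1) = f ((2 *\<^sub>R x - x', z - br x x') + a *\<^sub>R (3 *\<^sub>R y, br (2 *\<^sub>R x + x') y))"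
    for a
  proof -
    have "x + a *\<^sub>R y - v a = 2 *\<^sub>R x - x' + a *\<^sub>R (3 *\<^sub>R y)"
      unfolding v_def scaleR_2 scaleR_3 by (simp add: algebra_simps)
    moreover have "z + a *\<^sub>R br x y - br (x + a *\<^sub>R y) (v a) = z - br x x' + a *\<^sub>R br (2 *\<^sub>R x + x') y"
      unfolding br_v scaleR_2 by (simp add: bilinear_ladd[OF bl] algebra_simps)
    ultimately have "(x + a *\<^sub>R y, z + a *\<^sub>R br x y) + (-1) *\<^sub>R (v a, br (x + a *\<^sub>R y) (v a))
        = (2 *\<^sub>R x - x', z - br x x') + a *\<^sub>R (3 *\<^sub>R y, br (2 *\<^sub>R x + x') y)"
      by simp
    then show ?thesis by (simp only: F_def)
  qed
  ultimately show ?thesis by simp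
qed

lemma horiz_affine_along_bracket_direction:
  fixes br :: "'a::euclidean_space \<Rightarrow> 'a \<Rightarrow> 'b::euclidean_space"
  assumes bl: "bilinear br" and skew: "\<And>x y. br x y = - br y x" and h: "horiz_affine br f"
  shows "affine_along f (y, br y w)"
  unfolding affine_along_def
proof
  fix p :: "'a \<times> 'b"
  obtain X Z where p: "p = (X, Z)" by (cases p)
  define x where "x = (1/4) *\<^sub>R (X - 3 *\<^sub>R w)"
  define x' where "x' = - ((1/2) *\<^sub>R (X + 3 *\<^sub>R w))"
  have "2 *\<^sub>R x - x' = X" and "2 *\<^sub>R x + x' = - (3 *\<^sub>R w)"
    unfolding x_def x'_def by (simp_all add: algebra_simps scaleR_add_self)
  moreover have "br (- (3 *\<^sub>R w)) ((1/3) *\<^sub>R y) = br y w"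
    using skew[of w y] by (simp add: bilinear_lneg[OF bl] bilinear_lmul[OF bl] bilinear_rmul[OF bl])
  ultimately show "affine_map (\<lambda>t. f (p + t *\<^sub>R (y, br y w)))"
    using horiz_affine_regulus[OF bl skew h, of x x' "Z + br x x'" "(1/3) *\<^sub>R y"] p by simp
qed

lemma horiz_affine_along_horizontal:
  fixes br :: "'a::euclidean_space \<Rightarrow> 'a \<Rightarrow> 'b::euclidean_space"
  assumes "bilinear br" and "\<And>x y. br x y = - br y x" and "horiz_affine br f"
  shows "affine_along f (y, 0)"
  using horiz_affine_along_bracket_direction[OF assms, of y 0] by (simp add: bilinear_rzero[OF assms(1)])

lemma horiz_affine_along_vertical:
  fixes br :: "'a::euclidean_space \<Rightarrow> 'a \<Rightarrow> 'b::euclidean_space"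
  assumes bl: "bilinear br" and "\<And>x y. br x y = - br y x" and "horiz_affine br f"
  shows "affine_along f (0, br y w)"
proof -
  have "affine_along f ((1/2) *\<^sub>R (y, br y w) + (-1/2) *\<^sub>R (y, br y (- w)))"
  proof (rule affine_along_combination)
    show "affine_along f (y, br y w)" and "affine_along f (y, br y (- w))"
      by (rule horiz_affine_along_bracket_direction[OF assms])+
    show "affine_along f ((y, br y w) + (y, br y (- w)))"
      using horiz_affine_along_horizontal[OF assms, of "y + y"] by (simp add: bilinear_rneg[OF bl])
  qed
  moreover have "(1/2) *\<^sub>R (y, br y w) + (-1/2) *\<^sub>R (y, br y (- w)) = (0, br y w)"
    by (simp add: bilinear_rneg[OF bl] scaleR_left_distrib[symmetric])
  ultimately show ?thesis by simp
qed

section \<open>Second layers of dimension three\<close>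

lemma spanning_set_coordinates3:
  fixes S :: "'b::euclidean_space set"
  assumes "DIM('b) = 3" and "span S = UNIV"
  obtains c1 c2 c3 and k1 k2 k3 :: "'b \<Rightarrow> real"
  where "c1 \<in> S" "c2 \<in> S" "c3 \<in> S" and "linear k1" "linear k2" "linear k3"
    and "\<And>t1 t2 t3. k1 (t1 *\<^sub>R c1 + t2 *\<^sub>R c2 + t3 *\<^sub>R c3) = t1"
    and "\<And>t1 t2 t3. k2 (t1 *\<^sub>R c1 + t2 *\<^sub>R c2 + t3 *\<^sub>R c3) = t2"
    and "\<And>t1 t2 t3. k3 (t1 *\<^sub>R c1 + t2 *\<^sub>R c2 + t3 *\<^sub>R c3) = t3"
proof -
  obtain B where "B \<subseteq> S" and indep: "independent B" and "S \<subseteq> span B" and "card B = dim S"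
    by (rule basis_exists)
  moreover have "dim S = 3" using assms by (metis dim_UNIV dim_span)
  ultimately have "card B = 3" by simp
  then obtain c1 c2 c3 where B: "B = {c1, c2, c3}" and distinct: "c1 \<noteq> c2" "c1 \<noteq> c3" "c2 \<noteq> c3"
    unfolding card_3_iff by blast
  with \<open>B \<subseteq> S\<close> have "c1 \<in> S" "c2 \<in> S" "c3 \<in> S" by auto
  have "\<forall>b. \<exists>g. linear g \<and> (\<forall>x\<in>B. g x = (if x = b then 1 else 0))"
    by (intro allI linear_independent_extend[OF indep])
  then obtain k :: "'b \<Rightarrow> 'b \<Rightarrow> real"
    where k: "\<forall>b. linear (k b) \<and> (\<forall>x\<in>B. k b x = (if x = b then 1 else 0))"
    using choice[of "\<lambda>b g. linear g \<and> (\<forall>x\<in>B. g x = (if x = b then 1 else 0))"] by blast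
  have lk: "linear (k b)" for b using k by blast
  have kB: "k b x = (if x = b then 1 else 0)" if "x \<in> B" for b x using k that by blast
  have coords: "k b (t1 *\<^sub>R c1 + t2 *\<^sub>R c2 + t3 *\<^sub>R c3) = t1 * k b c1 + t2 * k b c2 + t3 * k b c3"
    for b t1 t2 t3 by (simp add: linear_add[OF lk] linear_scale[OF lk])
  show thesis
  proof (rule that[of c1 c2 c3 "k c1" "k c2" "k c3"])
    show "k c1 (t1 *\<^sub>R c1 + t2 *\<^sub>R c2 + t3 *\<^sub>R c3) = t1"
      and "k c2 (t1 *\<^sub>R c1 + t2 *\<^sub>R c2 + t3 *\<^sub>R c3) = t2"
      and "k c3 (t1 *\<^sub>R c1 + t2 *\<^sub>R c2 + t3 *\<^sub>R c3) = t3" for t1 t2 t3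
      using distinct by (simp_all add: coords kB B)
  qed (simp_all add: lk \<open>c1 \<in> S\<close> \<open>c2 \<in> S\<close> \<open>c3 \<in> S\<close>)
qed

text \<open>A real function on a three-dimensional space that is affine along every direction of a
  spanning set \<open>S\<close> is multi-affine in coordinates with respect to a basis taken from \<open>S\<close>, hence a
  polynomial of degree at most three; affinity along \<open>S\<close> makes its degree-two part vanish on \<open>S\<close>,
  which forces the polynomial to be affine as soon as \<open>S\<close> lies on no nonzero quadric cone.\<close>
lemma linear_if_affine_along_nonquadric:
  fixes g :: "'b::euclidean_space \<Rightarrow> real" and S :: "'b set"
  assumes dim: "DIM('b) = 3" and span: "span S = UNIV"
    and along: "\<And>d. d \<in> S \<Longrightarrow> affine_along g d"
    and nonquadric: "\<And>(Q :: 'b \<Rightarrow> 'b \<Rightarrow> real) c c'. bilinear Q \<Longrightarrow> (\<And>c c'. Q c c' = Q c' c)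
      \<Longrightarrow> (\<And>d. d \<in> S \<Longrightarrow> Q d d = 0) \<Longrightarrow> Q c c' = 0"
  shows "linear (\<lambda>z. g z - g 0)"
proof -
  obtain c1 c2 c3 k1 k2 k3 where S: "c1 \<in> S" "c2 \<in> S" "c3 \<in> S"
    and lk: "linear k1" "linear k2" "linear k3"
    and k1: "\<And>t1 t2 t3. k1 (t1 *\<^sub>R c1 + t2 *\<^sub>R c2 + t3 *\<^sub>R c3) = t1"
    and k2: "\<And>t1 t2 t3. k2 (t1 *\<^sub>R c1 + t2 *\<^sub>R c2 + t3 *\<^sub>R c3) = t2"
    and k3: "\<And>t1 t2 t3. k3 (t1 *\<^sub>R c1 + t2 *\<^sub>R c2 + t3 *\<^sub>R c3) = t3"
    by (rule spanning_set_coordinates3[OF dim span]) blast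
  note expansion = coordinates3_expansion[OF dim lk k1 k2 k3]
  have kc: "k1 c1 = 1" "k2 c1 = 0" "k3 c1 = 0" "k1 c2 = 0" "k2 c2 = 1" "k3 c2 = 0"
    "k1 c3 = 0" "k2 c3 = 0" "k3 c3 = 1"
    using k1[of 1 0 0] k2[of 1 0 0] k3[of 1 0 0] k1[of 0 1 0] k2[of 0 1 0] k3[of 0 1 0]
      k1[of 0 0 1] k2[of 0 0 1] k3[of 0 0 1] by simp_all
  define P where "P t1 t2 t3 = g (t1 *\<^sub>R c1 + t2 *\<^sub>R c2 + t3 *\<^sub>R c3)" for t1 t2 t3
  have line: "affine_map (\<lambda>s. P (t1 + s * k1 d) (t2 + s * k2 d) (t3 + s * k3 d))"
    if "d \<in> S" for d t1 t2 t3
  proof -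
    have "P (t1 + s * k1 d) (t2 + s * k2 d) (t3 + s * k3 d)
        = g ((t1 *\<^sub>R c1 + t2 *\<^sub>R c2 + t3 *\<^sub>R c3) + s *\<^sub>R (k1 d *\<^sub>R c1 + k2 d *\<^sub>R c2 + k3 d *\<^sub>R c3))" for s
      unfolding P_def by (simp add: algebra_simps)
    then show ?thesis
      using along[OF that] unfolding affine_along_def by (simp flip: expansion)
  qed
  have "affine_map (\<lambda>t1. P t1 t2 t3)" "affine_map (\<lambda>t2. P t1 t2 t3)" "affine_map (\<lambda>t3. P t1 t2 t3)"
    for t1 t2 t3
    using line[OF S(1), of 0 t2 t3] line[OF S(2), of t1 0 t3] line[OF S(3), of t1 t2 0] by (simp_all add: kc)
  then obtain a0 b1 b2 b3 a12 a13 a23 a123 where P: "\<And>t1 t2 t3. P t1 t2 t3 = a0 + b1 * t1 + b2 * t2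
      + b3 * t3 + a12 * (t1 * t2) + a13 * (t1 * t3) + a23 * (t2 * t3) + a123 * (t1 * t2 * t3)"
    by (rule multiaffine3_polynomial) blast
  have quadratic: "a12 * k1 d * k2 d + a13 * k1 d * k3 d + a23 * k2 d * k3 d
      + a123 * (k1 d * k2 d * t3 + k1 d * k3 d * t2 + k2 d * k3 d * t1) = 0"
    if "d \<in> S" for d t1 t2 t3
    by (rule multiaffine3_line_quadratic_coeff[OF P line[OF that]])
  define Q where "Q \<alpha> \<beta> \<gamma> c c' = \<alpha> * (k1 c * k2 c' + k2 c * k1 c') + \<beta> * (k1 c * k3 c' + k3 c * k1 c')
      + \<gamma> * (k2 c * k3 c' + k3 c * k2 c')" for \<alpha> \<beta> \<gamma> c c'
  have Q_bilinear: "bilinear (Q \<alpha> \<beta> \<gamma>)" for \<alpha> \<beta> \<gamma>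
    unfolding bilinear_def linear_iff Q_def
    by (simp add: linear_add[OF lk(1)] linear_add[OF lk(2)] linear_add[OF lk(3)]
      linear_scale[OF lk(1)] linear_scale[OF lk(2)] linear_scale[OF lk(3)] algebra_simps)
  have Q_symmetric: "Q \<alpha> \<beta> \<gamma> c c' = Q \<alpha> \<beta> \<gamma> c' c" for \<alpha> \<beta> \<gamma> c c'
    unfolding Q_def by (simp add: algebra_simps)
  have Q_zero: "Q \<alpha> \<beta> \<gamma> c c' = 0" if "\<And>d. d \<in> S \<Longrightarrow> Q \<alpha> \<beta> \<gamma> d d = 0"
    for \<alpha> \<beta> \<gamma> c c'
    by (rule nonquadric[of "Q \<alpha> \<beta> \<gamma>", OF Q_bilinear Q_symmetric that])
  have Q_diag: "Q \<alpha> \<beta> \<gamma> d d = 2 * (\<alpha> * k1 d * k2 d + \<beta> * k1 d * k3 d + \<gamma> * k2 d * k3 d)"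
    for \<alpha> \<beta> \<gamma> d
    unfolding Q_def by (simp add: algebra_simps)
  have "Q a12 a13 a23 c c' = 0" for c c'
    by (rule Q_zero) (use quadratic[of _ 0 0 0] in \<open>simp add: Q_diag algebra_simps\<close>)
  from this[of c1 c2] this[of c1 c3] this[of c2 c3]
  have quadratic_part: "a12 = 0" "a13 = 0" "a23 = 0" by (simp_all add: Q_def kc)
  have "Q 0 0 a123 c c' = 0" for c c'
    by (rule Q_zero) (use quadratic[of _ 0 0 1] quadratic_part in \<open>simp add: Q_diag algebra_simps\<close>)
  from this[of c2 c3] have "a123 = 0" by (simp add: Q_def kc)
  with quadratic_part have "g z = a0 + (b1 * k1 z + b2 * k2 z + b3 * k3 z)" for z
    using P[of "k1 z" "k2 z" "k3 z"] unfolding P_def expansion[of z, symmetric] by simp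
  moreover have "linear (\<lambda>z. b1 * k1 z + b2 * k2 z + b3 * k3 z)"
    by (intro linearI) (simp_all add: linear_add[OF lk(1)] linear_add[OF lk(2)] linear_add[OF lk(3)]
      linear_scale[OF lk(1)] linear_scale[OF lk(2)] linear_scale[OF lk(3)] algebra_simps)
  ultimately show ?thesis by (simp add: linear_0[OF lk(1)] linear_0[OF lk(2)] linear_0[OF lk(3)])
qed

text \<open>The key case is two brackets without a common factor: if \<open>Q [u1,u2] [u3,u4] \<noteq> 0\<close>, the
  brackets \<open>[u1,u2]\<close>, \<open>[u1,u3]\<close>, \<open>[u1,u4]\<close> are dual, up to scaling, to \<open>[u3,u4]\<close>, \<open>[u2,u4]\<close>,
  \<open>[u2,u3]\<close> and thus form a basis, but \<open>[u2,u3]\<close> would be a nonzero vector with vanishing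
  coordinates.\<close>
lemma symmetric_bilinear_zero_if_brackets_isotropic:
  fixes br :: "'a::euclidean_space \<Rightarrow> 'a \<Rightarrow> 'b::euclidean_space" and Q :: "'b \<Rightarrow> 'b \<Rightarrow> real"
  assumes st: "step2_carnot br" and dim: "DIM('b) = 3" and bQ: "bilinear Q"
    and sym: "\<And>c c'. Q c c' = Q c' c" and iso: "\<And>y w. Q (br y w) (br y w) = 0"
  shows "Q c c' = 0"
proof -
  note bl = step2_carnotD(1)[OF st] and skew = step2_carnotD(2)[OF st]
  note Q_simps = bilinear_ladd[OF bQ] bilinear_radd[OF bQ] bilinear_lneg[OF bQ] bilinear_rneg[OF bQ]
    bilinear_lmul[OF bQ] bilinear_rmul[OF bQ] bilinear_lzero[OF bQ] bilinear_rzero[OF bQ]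
  have common: "Q (br y w) (br y w') = 0" for y w w'
    using iso[of y "w + w'"] iso[of y w] iso[of y w'] sym[of "br y w" "br y w'"]
    by (simp add: bilinear_radd[OF bl] Q_simps)
  have exchange: "Q (br y w) (br y' w') = - Q (br y' w) (br y w')" for y w y' w'
    using iso[of "y + y'" w] common[of y w w'] common[of y' w w'] common[of "y + y'" w w']
    by (simp add: bilinear_ladd[OF bl] Q_simps)
  have "Q (br a b) (br a d) = 0" "Q (br a b) (br c a) = 0" "Q (br a b) (br b d) = 0"
    "Q (br a b) (br c b) = 0" for a b c d
    using common[of a b d] common[of a b c] common[of b a d] common[of b a c]
      skew[of a b] skew[of c a] skew[of c b] by (simp_all add: Q_simps)
  then have shared: "Q (br a b) (br c d) = 0" if "a = c \<or> a = d \<or> b = c \<or> b = d" for a b c d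
    using that by blast
  have cross: "Q (br u1 u2) (br u3 u4) = 0" for u1 u2 u3 u4
  proof (rule ccontr)
    define p where "p = Q (br u1 u2) (br u3 u4)"
    assume "Q (br u1 u2) (br u3 u4) \<noteq> 0"
    then have "p \<noteq> 0" unfolding p_def .
    have diag: "Q (br u1 u3) (br u2 u4) = - p" "Q (br u1 u4) (br u2 u3) = p"
      "Q (br u2 u3) (br u1 u4) = p"
      using exchange[of u1 u2 u3 u4] exchange[of u1 u3 u2 u4] sym[of "br u1 u4" "br u2 u3"]
        skew[of u3 u2] unfolding p_def by (simp_all add: Q_simps)
    define k where "k w c v = Q v w / Q c w" for w c v
    have lin: "linear (k w c)" for w c
      unfolding k_def using bQ by (simp add: bilinear_def linear_iff add_divide_distrib)
    have "k (br u3 u4) (br u1 u2) (t1 *\<^sub>R br u1 u2 + t2 *\<^sub>R br u1 u3 + t3 *\<^sub>R br u1 u4) = t1"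
      and "k (br u2 u4) (br u1 u3) (t1 *\<^sub>R br u1 u2 + t2 *\<^sub>R br u1 u3 + t3 *\<^sub>R br u1 u4) = t2"
      and "k (br u2 u3) (br u1 u4) (t1 *\<^sub>R br u1 u2 + t2 *\<^sub>R br u1 u3 + t3 *\<^sub>R br u1 u4) = t3"
      for t1 t2 t3 using diag \<open>p \<noteq> 0\<close> unfolding k_def p_def by (simp_all add: Q_simps shared)
    from coordinates3_expansion[OF dim lin lin lin this]
    have "br u2 u3 = k (br u3 u4) (br u1 u2) (br u2 u3) *\<^sub>R br u1 u2
        + k (br u2 u4) (br u1 u3) (br u2 u3) *\<^sub>R br u1 u3 + k (br u2 u3) (br u1 u4) (br u2 u3) *\<^sub>R br u1 u4" .
    then have "br u2 u3 = 0" unfolding k_def by (simp add: shared)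
    then show False using diag(3) \<open>p \<noteq> 0\<close> by (simp add: Q_simps)
  qed
  have span: "c \<in> span (range (\<lambda>(x, y). br x y))" for c
    using step2_carnotD(3)[OF st] by simp
  have lin1: "linear (\<lambda>c. Q c c')" and lin2: "linear (Q c)" for c c'
    using bQ unfolding bilinear_def by auto
  have brackets: "Q c (br y w) = 0" for c y w
    by (rule linear_eq_0_on_span[OF lin1 _ span]) (auto simp: cross)
  show ?thesis
    by (rule linear_eq_0_on_span[OF lin2 _ span]) (auto simp: brackets)
qed

lemma horiz_affine_linear_vertical:
  fixes br :: "'a::euclidean_space \<Rightarrow> 'a \<Rightarrow> 'b::euclidean_space"
  assumes st: "step2_carnot br" and dim: "DIM('b) = 3" and h: "horiz_affine br f"
  shows "linear (\<lambda>z. f (x, z) - f (x, 0))"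
proof (rule linear_if_affine_along_nonquadric[OF dim step2_carnotD(3)[OF st]])
  fix d assume "d \<in> range (\<lambda>(y, w). br y w)"
  then obtain y w where "d = br y w" by auto
  show "affine_along (\<lambda>z. f (x, z)) d"
    unfolding affine_along_def
  proof
    fix p
    have "affine_map (\<lambda>t. f ((x, p) + t *\<^sub>R (0, br y w)))"
      using horiz_affine_along_vertical[OF step2_carnotD(1,2)[OF st] h] unfolding affine_along_def by blast
    then show "affine_map (\<lambda>t. f (x, p + t *\<^sub>R d))" using \<open>d = br y w\<close> by simp
  qed
next
  fix Q :: "'b \<Rightarrow> 'b \<Rightarrow> real" and c c'
  assume "bilinear Q" and "\<And>c c'. Q c c' = Q c' c"
    and iso: "\<And>d. d \<in> range (\<lambda>(y, w). br y w) \<Longrightarrow> Q d d = 0"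
  then show "Q c c' = 0"
    by (rule symmetric_bilinear_zero_if_brackets_isotropic[OF st dim]) (use iso in auto)
qed

section \<open>The mixed part of a horizontally affine map\<close>

definition mixed_part :: "('a::real_vector \<times> 'b::real_vector \<Rightarrow> real) \<Rightarrow> 'a \<Rightarrow> 'b \<Rightarrow> real" where
  "mixed_part f x z = f (x, z) - f (x, 0) - f (0, z) + f (0, 0)"

lemma mixed_part_bilinear:
  assumes "\<And>z. linear (\<lambda>x. f (x, z) - f (0, z))" and "\<And>x. linear (\<lambda>z. f (x, z) - f (x, 0))"
  shows "bilinear (mixed_part f)"
  unfolding bilinear_def
proof (intro conjI allI)
  fix x
  have "mixed_part f x = (\<lambda>z. (f (x, z) - f (x, 0)) - (f (0, z) - f (0, 0)))"
    by (auto simp: mixed_part_def)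
  then show "linear (mixed_part f x)"
    using linear_compose_sub[OF assms(2)[of x] assms(2)[of 0]] by simp
next
  fix z
  have "(\<lambda>x. mixed_part f x z) = (\<lambda>x. (f (x, z) - f (0, z)) - (f (x, 0) - f (0, 0)))"
    by (auto simp: mixed_part_def)
  then show "linear (\<lambda>x. mixed_part f x z)"
    using linear_compose_sub[OF assms(1)[of z] assms(1)[of 0]] by simp
qed

lemma mixed_part_zero_if_affine_map:
  assumes "affine_map f"
  shows "mixed_part f x z = 0"
proof -
  obtain h c where "linear h" and f: "\<And>v. f v = h v + c" using assms unfolding affine_map_def by blast
  then have "h (x, z) = h (x, 0) + h (0, z)" and "h (0, 0) = 0"
    using linear_add[of h "(x, 0)" "(0, z)"] linear_0[of h] by (simp_all add: zero_prod_def)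
  then show ?thesis by (simp add: mixed_part_def f)
qed

lemma affine_map_if_mixed_part_zero:
  assumes L: "linear (\<lambda>x. f (x, 0) - f (0, 0))" and M: "linear (\<lambda>z. f (0, z) - f (0, 0))"
    and "\<And>x z. mixed_part f x z = 0"
  shows "affine_map f"
proof -
  define L where "L = (\<lambda>x. f (x, 0) - f (0, 0))"
  define M where "M = (\<lambda>z. f (0, z) - f (0, 0))"
  have "linear L" "linear M" unfolding L_def M_def by (fact L, fact M)
  then have "linear (\<lambda>p. L (fst p) + M (snd p))"
    by (intro linearI) (simp_all add: linear_add linear_scale algebra_simps)
  moreover have "f p = L (fst p) + M (snd p) + f (0, 0)" for p
    using assms(3)[of "fst p" "snd p"] unfolding L_def M_def mixed_part_def by simp
  ultimately show ?thesis unfolding affine_map_def by blast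
qed

text \<open>Along the line through the origin in direction \<open>(u, v)\<close>, the mixed part contributes
  the quadratic term \<open>t\<^sup>2 * mixed_part f u v\<close>.\<close>
lemma mixed_part_zero_along_affine_direction:
  assumes L: "linear (\<lambda>x. f (x, 0) - f (0, 0))" and M: "linear (\<lambda>z. f (0, z) - f (0, 0))"
    and \<beta>: "bilinear (mixed_part f)" and "affine_along f (u, v)"
  shows "mixed_part f u v = 0"
proof -
  have "f (t *\<^sub>R u, t *\<^sub>R v) = f (0, 0) + ((f (u, 0) - f (0, 0)) + (f (0, v) - f (0, 0))) * t
      + mixed_part f u v * t^2" for t
  proof -
    have "f (t *\<^sub>R u, t *\<^sub>R v) = f (0, 0) + (f (t *\<^sub>R u, 0) - f (0, 0)) + (f (0, t *\<^sub>R v) - f (0, 0))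
        + mixed_part f (t *\<^sub>R u) (t *\<^sub>R v)"
      by (simp add: mixed_part_def)
    also have "\<dots> = f (0, 0) + ((f (u, 0) - f (0, 0)) + (f (0, v) - f (0, 0))) * t
        + mixed_part f u v * t^2"
      using linear_scale[OF L, of t u] linear_scale[OF M, of t v]
      by (simp add: bilinear_lmul[OF \<beta>] bilinear_rmul[OF \<beta>] power2_eq_square algebra_simps)
    finally show ?thesis .
  qed
  moreover have "affine_map (\<lambda>t. f (0 + t *\<^sub>R (u, v)))"
    using assms(4) unfolding affine_along_def by blast
  ultimately have "affine_map (\<lambda>t. f (0, 0) + ((f (u, 0) - f (0, 0)) + (f (0, v) - f (0, 0))) * t
      + mixed_part f u v * t^2)"
    by simp
  then show ?thesis by (rule affine_map_quadratic_coeff)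
qed

lemma horiz_affine_linear_horizontal:
  fixes br :: "'a::euclidean_space \<Rightarrow> 'a \<Rightarrow> 'b::euclidean_space"
  assumes "bilinear br" and "\<And>x y. br x y = - br y x" and "horiz_affine br f"
  shows "linear (\<lambda>x. f (x, z) - f (0, z))"
proof (rule linear_if_affine_along_all)
  fix y
  show "affine_along (\<lambda>x. f (x, z)) y"
    unfolding affine_along_def
  proof
    fix p
    have "affine_map (\<lambda>t. f ((p, z) + t *\<^sub>R (y, 0)))"
      using horiz_affine_along_horizontal[OF assms] unfolding affine_along_def by blast
    then show "affine_map (\<lambda>t. f (p + t *\<^sub>R y, z))" by simp
  qed
qed

lemma alternating_trilinear_determinant:
  fixes T :: "'a \<Rightarrow> 'a \<Rightarrow> 'a \<Rightarrow> real"
  assumes T12: "\<And>x y w. T x y w = - T y x w" and T23: "\<And>x y w. T x y w = - T x w y"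
    and expand: "\<And>x y w. T x y w = a1 x * T u1 y w + a2 x * T u2 y w + a3 x * T u3 y w"
    and a1: "\<And>x. a1 x = T x u2 u3" and a2: "\<And>x. a2 x = T x u3 u1" and a3: "\<And>x. a3 x = T x u1 u2"
  shows "T x y w = a1 x * (a2 y * a3 w - a3 y * a2 w) + a2 x * (a3 y * a1 w - a1 y * a3 w)
    + a3 x * (a1 y * a2 w - a2 y * a1 w)"
proof -
  have row: "T v y w = a1 y * T v u1 w + a2 y * T v u2 w + a3 y * T v u3 w" for v y w
  proof -
    have "T v y w = - (a1 y * T u1 v w + a2 y * T u2 v w + a3 y * T u3 v w)"
      using T12[of v y w] expand[of y v w] by simp
    then show ?thesis using T12[of u1 v w] T12[of u2 v w] T12[of u3 v w] by simp
  qed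
  have col: "T v u w = a1 w * T v u u1 + a2 w * T v u u2 + a3 w * T v u u3" for v u w
  proof -
    have "T v u w = - (a1 w * T v u1 u + a2 w * T v u2 u + a3 w * T v u3 u)"
      using T23[of v u w] row[of v w u] by simp
    then show ?thesis using T23[of v u1 u] T23[of v u2 u] T23[of v u3 u] by simp
  qed
  have table: "T x u1 u1 = 0" "T x u2 u2 = 0" "T x u3 u3 = 0" "T x u1 u2 = a3 x" "T x u2 u1 = - a3 x"
    "T x u2 u3 = a1 x" "T x u3 u2 = - a1 x" "T x u3 u1 = a2 x" "T x u1 u3 = - a2 x"
    using T23[of x u1 u1] T23[of x u2 u2] T23[of x u3 u3] T23[of x u2 u1] T23[of x u3 u2]
      T23[of x u1 u3] a1[of x] a2[of x] a3[of x] by simp_all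
  have "T x y w = a1 y * (a1 w * T x u1 u1 + a2 w * T x u1 u2 + a3 w * T x u1 u3)
      + a2 y * (a1 w * T x u2 u1 + a2 w * T x u2 u2 + a3 w * T x u2 u3)
      + a3 y * (a1 w * T x u3 u1 + a2 w * T x u3 u2 + a3 w * T x u3 u3)"
    unfolding row[of x y w] col[of x u1 w] col[of x u2 w] col[of x u3 w] ..
  then show ?thesis unfolding table by (simp add: algebra_simps)
qed

lemma iso_F3Rd_intro:
  fixes br :: "'a::euclidean_space \<Rightarrow> 'a \<Rightarrow> 'b::euclidean_space"
    and \<theta> :: "'a \<Rightarrow> real^3" and \<pi>2 :: "'b \<Rightarrow> real^3"
  assumes "linear \<theta>" and "surj \<theta>" and "linear \<pi>2" and "bij \<pi>2"
    and "\<And>x y. \<pi>2 (br x y) = wedge3 (\<theta> x) (\<theta> y)"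
  shows "\<exists>d. iso_F3Rd br d"
proof (rule linear_surj_kernel_coordinates[OF assms(1,2)])
  fix d and l :: "nat \<Rightarrow> 'a \<Rightarrow> real"
  assume "\<And>i. linear (l i)"
    and "bij_betw (\<lambda>x. (\<theta> x, \<lambda>i. if i < d then l i x else 0)) UNIV {(t, u). \<forall>i\<ge>d. u i = 0}"
  with assms(1,3-5) show ?thesis
    unfolding iso_F3Rd_def F3Rd_V1_def by (intro exI[of _ d] exI[of _ \<theta>] exI[of _ l] exI[of _ \<pi>2]) auto
qed

lemma alternating_pairing_normalize:
  fixes br :: "'a::euclidean_space \<Rightarrow> 'a \<Rightarrow> 'b::euclidean_space" and \<beta> :: "'a \<Rightarrow> 'b \<Rightarrow> real"
  assumes st: "step2_carnot br" and b\<beta>: "bilinear \<beta>" and "\<beta> x0 z0 \<noteq> 0"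
  obtains u1 u2 u3 where "\<beta> u1 (br u2 u3) = 1"
proof -
  have lin: "linear (\<beta> x0)" using b\<beta> by (simp add: bilinear_def)
  have "\<exists>y w. \<beta> x0 (br y w) \<noteq> 0"
  proof (rule ccontr)
    assume none: "\<not> (\<exists>y w. \<beta> x0 (br y w) \<noteq> 0)"
    have "z0 \<in> span (range (\<lambda>(y, w). br y w))" by (simp add: step2_carnotD(3)[OF st])
    then have "\<beta> x0 z0 = 0" by (rule linear_eq_0_on_span[OF lin, rotated]) (use none in auto)
    with \<open>\<beta> x0 z0 \<noteq> 0\<close> show False ..
  qed
  then obtain y w where "\<beta> x0 (br y w) \<noteq> 0" by blast
  then show thesis
    by (intro that[of "(1 / \<beta> x0 (br y w)) *\<^sub>R x0" y w]) (simp add: bilinear_lmul[OF b\<beta>])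
qed

lemma alternating_pairing_skew:
  fixes br :: "'a::real_vector \<Rightarrow> 'a \<Rightarrow> 'b::real_vector" and \<beta> :: "'a \<Rightarrow> 'b \<Rightarrow> real"
  assumes bl: "bilinear br" and skew: "\<And>x y. br x y = - br y x"
    and b\<beta>: "bilinear \<beta>" and alt: "\<And>y w. \<beta> y (br y w) = 0"
  shows "\<beta> x (br y w) = - \<beta> y (br x w)" and "\<beta> x (br y w) = - \<beta> x (br w y)"
proof -
  have "\<beta> x (br x w) + \<beta> x (br y w) + (\<beta> y (br x w) + \<beta> y (br y w)) = 0"
    using alt[of "x + y" w] by (simp add: bilinear_ladd[OF bl] bilinear_ladd[OF b\<beta>] bilinear_radd[OF b\<beta>])
  then show "\<beta> x (br y w) = - \<beta> y (br x w)" using alt[of x w] alt[of y w] by simp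
  show "\<beta> x (br y w) = - \<beta> x (br w y)" using skew[of y w] by (simp add: bilinear_rneg[OF b\<beta>])
qed

text \<open>With \<open>T x y w = \<beta> x [y, w]\<close> normalised by \<open>T u1 u2 u3 = 1\<close>, the brackets
  \<open>[u2,u3]\<close>, \<open>[u3,u1]\<close>, \<open>[u1,u2]\<close> and the functionals \<open>\<beta> u1\<close>, \<open>\<beta> u2\<close>, \<open>\<beta> u3\<close> are dual bases
  of the three-dimensional second layer, and \<open>T\<close> is the determinant of \<open>(a1, a2, a3)\<close>.\<close>
lemma alternating_pairing_frame:
  fixes br :: "'a::euclidean_space \<Rightarrow> 'a \<Rightarrow> 'b::euclidean_space" and \<beta> :: "'a \<Rightarrow> 'b \<Rightarrow> real"
  assumes st: "step2_carnot br" and dim: "DIM('b) = 3" and b\<beta>: "bilinear \<beta>"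
    and alt: "\<And>y w. \<beta> y (br y w) = 0" and one: "\<beta> u1 (br u2 u3) = 1"
  defines "a1 \<equiv> \<lambda>x. \<beta> x (br u2 u3)" and "a2 \<equiv> \<lambda>x. \<beta> x (br u3 u1)" and "a3 \<equiv> \<lambda>x. \<beta> x (br u1 u2)"
  shows "a1 u1 = 1" "a1 u2 = 0" "a1 u3 = 0" "a2 u1 = 0" "a2 u2 = 1" "a2 u3 = 0"
    "a3 u1 = 0" "a3 u2 = 0" "a3 u3 = 1"
    and "c = \<beta> u1 c *\<^sub>R br u2 u3 + \<beta> u2 c *\<^sub>R br u3 u1 + \<beta> u3 c *\<^sub>R br u1 u2"
    and "\<beta> u1 (br y w) = a2 y * a3 w - a3 y * a2 w" "\<beta> u2 (br y w) = a3 y * a1 w - a1 y * a3 w"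
    "\<beta> u3 (br y w) = a1 y * a2 w - a2 y * a1 w"
proof -
  define T where "T x y w = \<beta> x (br y w)" for x y w
  note skew = alternating_pairing_skew[OF step2_carnotD(1,2)[OF st] b\<beta> alt]
  have T12: "T x y w = - T y x w" and T23: "T x y w = - T x w y" for x y w
    unfolding T_def by (fact skew(1), fact skew(2))
  have cyclic: "T x y w = T y w x" for x y w using T12[of x y w] T23[of y x w] by simp
  have T_same: "T x x w = 0" "T x y y = 0" "T x y x = 0" for x y w
    using T12[of x x w] T23[of x y y] T12[of x y x] T23[of y x x] by simp_all
  have a: "a1 x = T x u2 u3" "a2 x = T x u3 u1" "a3 x = T x u1 u2" for x
    unfolding a1_def a2_def a3_def T_def by simp_all
  show a_u: "a1 u1 = 1" "a1 u2 = 0" "a1 u3 = 0" "a2 u1 = 0" "a2 u2 = 1" "a2 u3 = 0"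
    "a3 u1 = 0" "a3 u2 = 0" "a3 u3 = 1"
    using one cyclic[of u1 u2 u3] cyclic[of u2 u3 u1] unfolding a T_def[symmetric] by (simp_all add: T_same)
  have lin: "linear (\<beta> x)" for x using b\<beta> by (simp add: bilinear_def)
  have "\<beta> u (t1 *\<^sub>R br u2 u3 + t2 *\<^sub>R br u3 u1 + t3 *\<^sub>R br u1 u2) = t1 * a1 u + t2 * a2 u + t3 * a3 u"
    for u t1 t2 t3 unfolding a1_def a2_def a3_def by (simp add: linear_add[OF lin] linear_scale[OF lin])
  then have "\<beta> u1 (t1 *\<^sub>R br u2 u3 + t2 *\<^sub>R br u3 u1 + t3 *\<^sub>R br u1 u2) = t1"
    "\<beta> u2 (t1 *\<^sub>R br u2 u3 + t2 *\<^sub>R br u3 u1 + t3 *\<^sub>R br u1 u2) = t2"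
    "\<beta> u3 (t1 *\<^sub>R br u2 u3 + t2 *\<^sub>R br u3 u1 + t3 *\<^sub>R br u1 u2) = t3" for t1 t2 t3
    by (simp_all add: a_u)
  from coordinates3_expansion[OF dim lin lin lin this]
  show expansion: "c = \<beta> u1 c *\<^sub>R br u2 u3 + \<beta> u2 c *\<^sub>R br u3 u1 + \<beta> u3 c *\<^sub>R br u1 u2" for c .
  have "T x y w = a1 x * T u1 y w + a2 x * T u2 y w + a3 x * T u3 y w" for x y w
    using arg_cong[OF expansion[of "br y w"], of "\<beta> x"]
    unfolding T_def a1_def a2_def a3_def by (simp add: linear_add[OF lin] linear_scale[OF lin] algebra_simps)
  from alternating_trilinear_determinant[OF T12 T23 this a]
  have det: "T x y w = a1 x * (a2 y * a3 w - a3 y * a2 w) + a2 x * (a3 y * a1 w - a1 y * a3 w)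
    + a3 x * (a1 y * a2 w - a2 y * a1 w)" for x y w .
  show "\<beta> u1 (br y w) = a2 y * a3 w - a3 y * a2 w" "\<beta> u2 (br y w) = a3 y * a1 w - a1 y * a3 w"
    "\<beta> u3 (br y w) = a1 y * a2 w - a2 y * a1 w"
    using det[of u1 y w] det[of u2 y w] det[of u3 y w] unfolding T_def by (simp_all add: a_u)
qed

lemma iso_F3Rd_if_alternating_pairing:
  fixes br :: "'a::euclidean_space \<Rightarrow> 'a \<Rightarrow> 'b::euclidean_space" and \<beta> :: "'a \<Rightarrow> 'b \<Rightarrow> real"
  assumes st: "step2_carnot br" and dim: "DIM('b) = 3" and b\<beta>: "bilinear \<beta>"
    and alt: "\<And>y w. \<beta> y (br y w) = 0" and "\<beta> x0 z0 \<noteq> 0"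
  shows "\<exists>d. iso_F3Rd br d"
proof -
  obtain u1 u2 u3 where one: "\<beta> u1 (br u2 u3) = 1"
    using alternating_pairing_normalize[OF st b\<beta> \<open>\<beta> x0 z0 \<noteq> 0\<close>] by blast
  define a1 a2 a3 where "a1 x = \<beta> x (br u2 u3)" and "a2 x = \<beta> x (br u3 u1)" and "a3 x = \<beta> x (br u1 u2)"
    for x
  note frame = alternating_pairing_frame[OF st dim b\<beta> alt one, folded a1_def a2_def a3_def]
  have lin: "linear (\<beta> x)" "linear (\<lambda>x. \<beta> x c)" for x c using b\<beta> by (simp_all add: bilinear_def)
  have la: "linear a1" "linear a2" "linear a3" unfolding a1_def a2_def a3_def by (fact lin(2))+
  define \<theta> where "\<theta> x = (vector [a1 x, a2 x, a3 x] :: real^3)" for x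
  define \<pi>2 where "\<pi>2 c = (vector [\<beta> u3 c, - \<beta> u2 c, \<beta> u1 c] :: real^3)" for c
  show ?thesis
  proof (rule iso_F3Rd_intro)
    show "linear \<theta>"
      unfolding \<theta>_def linear_iff vec_eq_iff forall_3
      by (simp add: linear_add[OF la(1)] linear_add[OF la(2)] linear_add[OF la(3)]
        linear_scale[OF la(1)] linear_scale[OF la(2)] linear_scale[OF la(3)])
    show "linear \<pi>2"
      unfolding \<pi>2_def linear_iff vec_eq_iff forall_3
      by (simp add: linear_add[OF lin(1)] linear_scale[OF lin(1)])
    have "\<theta> (v$1 *\<^sub>R u1 + v$2 *\<^sub>R u2 + v$3 *\<^sub>R u3) = v" for v
      unfolding \<theta>_def vec_eq_iff forall_3
      by (simp add: linear_add[OF la(1)] linear_add[OF la(2)] linear_add[OF la(3)]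
        linear_scale[OF la(1)] linear_scale[OF la(2)] linear_scale[OF la(3)] frame(1-9))
    then show "surj \<theta>" by (rule surjI)
    have "inj \<pi>2"
    proof (rule injI)
      fix c c' assume "\<pi>2 c = \<pi>2 c'"
      then have "\<beta> u1 c = \<beta> u1 c'" "\<beta> u2 c = \<beta> u2 c'" "\<beta> u3 c = \<beta> u3 c'"
        unfolding \<pi>2_def vec_eq_iff forall_3 by simp_all
      then show "c = c'" using frame(10)[of c] frame(10)[of c'] by simp
    qed
    moreover have "\<pi>2 (v$3 *\<^sub>R br u2 u3 - v$2 *\<^sub>R br u3 u1 + v$1 *\<^sub>R br u1 u2) = v" for v
      unfolding \<pi>2_def vec_eq_iff forall_3
      by (simp add: linear_add[OF lin(1)] linear_diff[OF lin(1)] linear_scale[OF lin(1)]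
        frame(1-9)[unfolded a1_def a2_def a3_def])
    then have "surj \<pi>2" by (rule surjI)
    ultimately show "bij \<pi>2" by (simp add: bij_def)
    show "\<pi>2 (br x y) = wedge3 (\<theta> x) (\<theta> y)" for x y
      unfolding \<pi>2_def \<theta>_def wedge3_def vec_eq_iff forall_3 by (simp add: frame(11-13) algebra_simps)
  qed
qed

lemma iso_F3Rd_if_horiz_affine_not_affine:
  fixes br :: "'a::euclidean_space \<Rightarrow> 'a \<Rightarrow> 'b::euclidean_space"
  assumes st: "step2_carnot br" and dim: "DIM('b) = 3" and h: "horiz_affine br f"
    and "\<not> affine_map f"
  shows "\<exists>d. iso_F3Rd br d"
proof -
  note hor = horiz_affine_linear_horizontal[OF step2_carnotD(1,2)[OF st] h]
    and ver = horiz_affine_linear_vertical[OF st dim h]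
  have \<beta>: "bilinear (mixed_part f)" by (rule mixed_part_bilinear[OF hor ver])
  have "mixed_part f y (br y w) = 0" for y w
    by (rule mixed_part_zero_along_affine_direction[OF hor[of 0] ver[of 0] \<beta>
          horiz_affine_along_bracket_direction[OF step2_carnotD(1,2)[OF st] h]])
  moreover obtain x z where "mixed_part f x z \<noteq> 0"
    using affine_map_if_mixed_part_zero[OF hor[of 0] ver[of 0]] \<open>\<not> affine_map f\<close> by blast
  ultimately show ?thesis by (rule iso_F3Rd_if_alternating_pairing[OF st dim \<beta>])
qed

text \<open>In coordinates, \<open>wedge_pairing\<close> is the wedge product \<open>\<Lambda>\<^sup>1 \<times> \<Lambda>\<^sup>2 \<rightarrow> \<Lambda>\<^sup>3 \<cong> \<real>\<close>; it is
  bilinear and vanishes on \<open>a \<and> (a \<and> b)\<close>.\<close>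
definition wedge_pairing :: "real^3 \<Rightarrow> real^3 \<Rightarrow> real" where
  "wedge_pairing a c = a$1 * c$3 - a$2 * c$2 + a$3 * c$1"

lemma horiz_affine_not_affine_if_iso_F3Rd:
  fixes br :: "'a::euclidean_space \<Rightarrow> 'a \<Rightarrow> 'b::euclidean_space"
  assumes bl: "bilinear br" and "iso_F3Rd br d"
  shows "\<exists>f. horiz_affine br f \<and> \<not> affine_map f"
proof -
  obtain \<theta> :: "'a \<Rightarrow> real^3" and l :: "nat \<Rightarrow> 'a \<Rightarrow> real" and \<pi>2 :: "'b \<Rightarrow> real^3"
    where l\<theta>: "linear \<theta>" and l\<pi>: "linear \<pi>2"
      and bij1: "bij_betw (\<lambda>x. (\<theta> x, \<lambda>i. if i < d then l i x else 0)) UNIV (F3Rd_V1 d)"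
      and "bij \<pi>2" and brk: "\<And>x y. \<pi>2 (br x y) = wedge3 (\<theta> x) (\<theta> y)"
    using assms(2) unfolding iso_F3Rd_def by blast
  define f where "f q = wedge_pairing (\<theta> (fst q)) (\<pi>2 (snd q))" for q
  have "horiz_affine br f"
    unfolding horiz_affine_iff_lines[OF bl] affine_map_real_iff
  proof (intro allI)
    fix x z y
    have "f ((x, z) + t *\<^sub>R (y, br x y))
        = wedge_pairing (\<theta> y) (\<pi>2 z) * t + wedge_pairing (\<theta> x) (\<pi>2 z)" for t
      unfolding f_def wedge_pairing_def
      by (simp add: linear_add[OF l\<theta>] linear_scale[OF l\<theta>] linear_add[OF l\<pi>] linear_scale[OF l\<pi>]
          brk wedge3_def algebra_simps)
    then show "\<exists>m c. \<forall>t. f ((x, z) + t *\<^sub>R (y, br x y)) = m * t + c" by blast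
  qed
  moreover have "\<not> affine_map f"
  proof
    assume "affine_map f"
    have "(vector [1, 0, 0], \<lambda>i. 0) \<in> F3Rd_V1 d" unfolding F3Rd_V1_def by simp
    then have "(vector [1, 0, 0], \<lambda>i. 0) \<in> range (\<lambda>x. (\<theta> x, \<lambda>i. if i < d then l i x else 0))"
      using bij1 unfolding bij_betw_def by blast
    then obtain x where "(vector [1, 0, 0], \<lambda>i. 0) = (\<theta> x, \<lambda>i. if i < d then l i x else 0)"
      by blast
    then have "\<theta> x = vector [1, 0, 0]" by simp
    moreover have "\<pi>2 (inv \<pi>2 (vector [0, 0, 1])) = vector [0, 0, 1]"
      using \<open>bij \<pi>2\<close> by (simp add: bij_is_surj surj_f_inv_f)
    ultimately have "mixed_part f x (inv \<pi>2 (vector [0, 0, 1])) = 1"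
      unfolding mixed_part_def f_def wedge_pairing_def by (simp add: linear_0[OF l\<theta>] linear_0[OF l\<pi>])
    with mixed_part_zero_if_affine_map[OF \<open>affine_map f\<close>] show False by simp
  qed
  ultimately show ?thesis by blast
qed

theorem proposition6p12:
  fixes br :: "'a::euclidean_space \<Rightarrow> 'a \<Rightarrow> 'b::euclidean_space"
  assumes "step2_carnot br"
    and "DIM('b) = 3"
  shows "{f :: 'a \<times> 'b \<Rightarrow> real. affine_map f} \<subset> {f. horiz_affine br f}
     \<longleftrightarrow> (\<exists>d::nat. iso_F3Rd br d)"
proof -
  have "{f :: 'a \<times> 'b \<Rightarrow> real. affine_map f} \<subseteq> {f. horiz_affine br f}"
    using horiz_affine_if_affine_map[OF step2_carnotD(1)[OF assms(1)]] by blast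
  then have "{f :: 'a \<times> 'b \<Rightarrow> real. affine_map f} \<subset> {f. horiz_affine br f}
      \<longleftrightarrow> (\<exists>f. horiz_affine br f \<and> \<not> affine_map f)"
    by blast
  also have "\<dots> \<longleftrightarrow> (\<exists>d. iso_F3Rd br d)"
    using iso_F3Rd_if_horiz_affine_not_affine[OF assms]
      horiz_affine_not_affine_if_iso_F3Rd[OF step2_carnotD(1)[OF assms(1)]] by blast
  finally show ?thesis .
qed

end
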